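(* Let $(M,f,g)$ be an $(m,n)$-hypermodule over a commutative Krasner $(m,n)$-hyperring $(R,f',g')$ with scalar identity $1$, let $Q$ be a proper subhypermodule of $M$ and put $S=M\setminus Q$. Then $Q$ is an $n$-ary classical prime subhypermodule of $M$ if and only if the following holds: for all hyperideals $I_1,\dots,I_{n-1}$ of $R$ and all subhypermodules $N_1,N_2$ of $M$, if $f(N_1,g(I_i,1^{(n-2)},N_2),0^{(m-2)})\cap S\neq\varnothing$ for every $1\le i\le n-1$, then $f(N_1,g(I_1^{n-1},N_2),0^{(m-2)})\cap S\neq\varnothing$.
   Context: A commutative Krasner $(m,n)$-hyperring with scalar identity $1$ is a triple $(R,f',g')$ where $(R,f')$ is a canonical $m$-ary hypergroup with zero $0$, $(R,g')$ is a commutative $n$-ary semigroup, $g'$ is distributive over $f'$, $0$ is a zero element for $g'$, and $g'(x,1^{(n-1)})=x$ for all $x$. Notation: $x_i^j$ denotes the sequence $x_i,\dots,x_j$ and $x^{(k)}$ denotes $x$ repeated $k$ times. A hyperideal $I$ of $R$ is a nonempty subset such that $(I,f')$ is an $m$-ary subhypergroup and $g'(x_1^{i-1},I,x_{i+1}^n)\subseteq I$ for all $x$'s and $i$. An $(m,n)$-hypermodule over $R$ is a triple $(M,f,g)$ where $(M,f)$ is a canonical $m$-ary hypergroup with zero $0$ and $g:R^{n-1}\times M\to P^*(M)$ satisfies: $g(r_1^{n-1},f(x_1^m))=f(g(r_1^{n-1},x_1),\dots,g(r_1^{n-1},x_m))$; $g(r_1^{i-1},f'(s_1^m),r_{i+1}^{n-1},x)=f(g(r_1^{i-1},s_1,r_{i+1}^{n-1},x),\dots,g(r_1^{i-1},s_m,r_{i+1}^{n-1},x))$;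 $g(r_1^{i-1},g'(r_i^{i+n-1}),r_{i+n}^{2n-2},x)=g(r_1^{n-1},g(r_n^{2n-2},x))$; and $g(r_1^{i-1},0,r_{i+1}^{n-1},x)=\{0\}$. Also $g(1^{(n-1)},a)=\{a\}$ and $g(r_1^{n-1},0)=\{0\}$. For subsets, $g(A_1,\dots,A_{n-1},X)=\bigcup\{g(r_1^{n-1},x): r_i\in A_i, x\in X\}$ and similarly $f$ applied to subsets is the union over elements. A subhypermodule of $M$ is a nonempty $N\subseteq M$ with $(N,f)$ an $m$-ary subhypergroup and $g(R^{(n-1)},N)\subseteq N$. A proper subhypermodule $Q$ of $M$ is $n$-ary classical prime if for all $r_1^{n-1}\in R$ and $a\in M$, $g(r_1^{n-1},a)\subseteq Q$ implies $g(r_i,1^{(n-2)},a)\subseteq Q$ for some $1\le i\le n-1$. *)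

theory Defs
  imports "HOL-Library.Multiset"
begin

text \<open>Carriers are the whole types. An m-ary hyperoperation on 'a is a map
  'a list \<Rightarrow> 'a set, meaningful on lists of length m. Sequences x_1^k are lists.\<close>

definition hlift :: "('a list \<Rightarrow> 'b set) \<Rightarrow> 'a set list \<Rightarrow> 'b set" where
  "hlift F As = \<Union>{F xs | xs. list_all2 (\<lambda>x A. x \<in> A) xs As}"

definition hyperop :: "nat \<Rightarrow> ('a list \<Rightarrow> 'a set) \<Rightarrow> bool" where
  "hyperop m f \<longleftrightarrow> (\<forall>xs. length xs = m \<longrightarrow> f xs \<noteq> {})"

definition hcomm :: "nat \<Rightarrow> ('a list \<Rightarrow> 'b) \<Rightarrow> bool" where
  "hcomm m f \<longleftrightarrow> (\<forall>xs ys. length xs = m \<longrightarrow> mset xs = mset ys \<longrightarrow> f xs = f ys)"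

definition hassoc_at :: "nat \<Rightarrow> ('a list \<Rightarrow> 'a set) \<Rightarrow> nat \<Rightarrow> 'a list \<Rightarrow> 'a set" where
  "hassoc_at m f i xs = (\<Union>y\<in>f (take m (drop i xs)). f (take i xs @ y # drop (i + m) xs))"

definition hsemihypergroup :: "nat \<Rightarrow> ('a list \<Rightarrow> 'a set) \<Rightarrow> bool" where
  "hsemihypergroup m f \<longleftrightarrow> hyperop m f \<and>
     (\<forall>xs. length xs = 2 * m - 1 \<longrightarrow> (\<forall>i<m. \<forall>j<m. hassoc_at m f i xs = hassoc_at m f j xs))"

definition hinv :: "nat \<Rightarrow> ('a list \<Rightarrow> 'a set) \<Rightarrow> 'a \<Rightarrow> 'a \<Rightarrow> 'a" where
  "hinv m f z x = (THE y. z \<in> f (x # y # replicate (m - 2) z))"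

definition canonical_hypergroup :: "nat \<Rightarrow> ('a list \<Rightarrow> 'a set) \<Rightarrow> 'a \<Rightarrow> bool" where
  "canonical_hypergroup m f z \<longleftrightarrow> 2 \<le> m \<and> hsemihypergroup m f \<and> hcomm m f \<and>
     (\<forall>x. f (x # replicate (m - 1) z) = {x}) \<and>
     (\<forall>e. (\<forall>x. f (x # replicate (m - 1) e) = {x}) \<longrightarrow> e = z) \<and>
     (\<forall>x. \<exists>!y. z \<in> f (x # y # replicate (m - 2) z)) \<and>
     (\<forall>xs x i. length xs = m \<longrightarrow> x \<in> f xs \<longrightarrow> i < m \<longrightarrow>
        xs ! i \<in> f (x # map (hinv m f z) (take i xs @ drop (Suc i) xs)))"

definition nary_semigroup :: "nat \<Rightarrow> ('a list \<Rightarrow> 'a) \<Rightarrow> bool" where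
  "nary_semigroup n g \<longleftrightarrow> (\<forall>xs. length xs = 2 * n - 1 \<longrightarrow> (\<forall>i<n. \<forall>j<n.
      g (take i xs @ g (take n (drop i xs)) # drop (i + n) xs) =
      g (take j xs @ g (take n (drop j xs)) # drop (j + n) xs)))"

definition krasner_hyperring ::
  "nat \<Rightarrow> nat \<Rightarrow> ('r list \<Rightarrow> 'r set) \<Rightarrow> ('r list \<Rightarrow> 'r) \<Rightarrow> 'r \<Rightarrow> 'r \<Rightarrow> bool" where
  "krasner_hyperring m n f' g' z one \<longleftrightarrow> 2 \<le> n \<and>
     canonical_hypergroup m f' z \<and> nary_semigroup n g' \<and> hcomm n g' \<and>
     (\<forall>xs ys i. length xs = n \<longrightarrow> length ys = m \<longrightarrow> i < n \<longrightarrow>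
        (\<lambda>y. g' (xs[i := y])) ` f' ys = f' (map (\<lambda>y. g' (xs[i := y])) ys)) \<and>
     (\<forall>xs i. length xs = n \<longrightarrow> i < n \<longrightarrow> g' (xs[i := z]) = z) \<and>
     (\<forall>x. g' (x # replicate (n - 1) one) = x)"

definition hypermodule ::
  "nat \<Rightarrow> nat \<Rightarrow> ('r list \<Rightarrow> 'r set) \<Rightarrow> ('r list \<Rightarrow> 'r) \<Rightarrow> 'r \<Rightarrow> 'r \<Rightarrow>
   ('m list \<Rightarrow> 'm set) \<Rightarrow> ('r list \<Rightarrow> 'm \<Rightarrow> 'm set) \<Rightarrow> 'm \<Rightarrow> bool" where
  "hypermodule m n f' g' zr one f g zm \<longleftrightarrow>
     krasner_hyperring m n f' g' zr one \<and> canonical_hypergroup m f zm \<and>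
     (\<forall>rs x. length rs = n - 1 \<longrightarrow> g rs x \<noteq> {}) \<and>
     (\<forall>rs xs. length rs = n - 1 \<longrightarrow> length xs = m \<longrightarrow>
        (\<Union>y\<in>f xs. g rs y) = hlift f (map (g rs) xs)) \<and>
     (\<forall>rs i ss x. length rs = n - 1 \<longrightarrow> i < n - 1 \<longrightarrow> length ss = m \<longrightarrow>
        (\<Union>s\<in>f' ss. g (rs[i := s]) x) = hlift f (map (\<lambda>s. g (rs[i := s]) x) ss)) \<and>
     (\<forall>rs i x. length rs = 2 * n - 2 \<longrightarrow> i < n - 1 \<longrightarrow>
        g (take i rs @ g' (take n (drop i rs)) # drop (i + n) rs) x =
        (\<Union>y\<in>g (drop (n - 1) rs) x. g (take (n - 1) rs) y)) \<and>
     (\<forall>rs i x. length rs = n - 1 \<longrightarrow> i < n - 1 \<longrightarrow> g (rs[i := zr]) x = {zm}) \<and>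
     (\<forall>a. g (replicate (n - 1) one) a = {a}) \<and>
     (\<forall>rs. length rs = n - 1 \<longrightarrow> g rs zm = {zm})"

definition gset :: "('r list \<Rightarrow> 'm \<Rightarrow> 'm set) \<Rightarrow> 'r set list \<Rightarrow> 'm set \<Rightarrow> 'm set" where
  "gset g As X = \<Union>{g rs x | rs x. list_all2 (\<lambda>r A. r \<in> A) rs As \<and> x \<in> X}"

definition sub_hypergroup :: "nat \<Rightarrow> ('a list \<Rightarrow> 'a set) \<Rightarrow> 'a set \<Rightarrow> bool" where
  "sub_hypergroup m f N \<longleftrightarrow> N \<noteq> {} \<and>
     (\<forall>xs. length xs = m \<longrightarrow> set xs \<subseteq> N \<longrightarrow> f xs \<subseteq> N) \<and>
     (\<forall>xs i. length xs = m - 1 \<longrightarrow> set xs \<subseteq> N \<longrightarrow> i < m \<longrightarrow>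
        (\<Union>y\<in>N. f (take i xs @ y # drop i xs)) = N)"

definition hyperideal :: "nat \<Rightarrow> nat \<Rightarrow> ('r list \<Rightarrow> 'r set) \<Rightarrow> ('r list \<Rightarrow> 'r) \<Rightarrow> 'r set \<Rightarrow> bool" where
  "hyperideal m n f' g' I \<longleftrightarrow> sub_hypergroup m f' I \<and>
     (\<forall>xs i. length xs = n \<longrightarrow> i < n \<longrightarrow> (\<lambda>y. g' (xs[i := y])) ` I \<subseteq> I)"

definition subhypermodule ::
  "nat \<Rightarrow> nat \<Rightarrow> ('m list \<Rightarrow> 'm set) \<Rightarrow> ('r list \<Rightarrow> 'm \<Rightarrow> 'm set) \<Rightarrow> 'm set \<Rightarrow> bool" where
  "subhypermodule m n f g N \<longleftrightarrow> sub_hypergroup m f N \<and>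
     gset g (replicate (n - 1) UNIV) N \<subseteq> N"

definition classical_prime ::
  "nat \<Rightarrow> nat \<Rightarrow> ('m list \<Rightarrow> 'm set) \<Rightarrow> ('r list \<Rightarrow> 'm \<Rightarrow> 'm set) \<Rightarrow> 'r \<Rightarrow> 'm set \<Rightarrow> bool" where
  "classical_prime m n f g one Q \<longleftrightarrow> subhypermodule m n f g Q \<and> Q \<noteq> UNIV \<and>
     (\<forall>rs a. length rs = n - 1 \<longrightarrow> g rs a \<subseteq> Q \<longrightarrow>
        (\<exists>i<n - 1. g (rs ! i # replicate (n - 2) one) a \<subseteq> Q))"

end

theory Submission
  imports Defs
begin

text \<open>
  Padding with the scalar identity makes the n-ary structure binary: writing
  \<open>r x = g(r, 1, \<dots>, 1, x)\<close> and \<open>r\<^sub>1 \<cdot> \<dots> \<cdot> r\<^sub>n\<^sub>-\<^sub>1\<close> for the product in \<open>R\<close>, one has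
  \<open>g(r\<^sub>1, \<dots>, r\<^sub>n\<^sub>-\<^sub>1, x) = (r\<^sub>1 \<cdot> \<dots> \<cdot> r\<^sub>n\<^sub>-\<^sub>1) x\<close>. Since \<open>0\<close> lies in every subhypermodule,
  \<open>f(N\<^sub>1, g(I\<^sub>1, \<dots>, I\<^sub>n\<^sub>-\<^sub>1, N\<^sub>2), 0, \<dots>, 0) \<subseteq> Q\<close> just says \<open>N\<^sub>1 \<subseteq> Q\<close> and \<open>g(I\<^sub>1, \<dots>, I\<^sub>n\<^sub>-\<^sub>1, N\<^sub>2) \<subseteq> Q\<close>.

  Let \<open>Q\<close> be classical prime with \<open>g(I\<^sub>1, \<dots>, I\<^sub>n\<^sub>-\<^sub>1, N\<^sub>2) \<subseteq> Q\<close>. Let \<open>A\<^sub>i\<close> be the set of \<open>x \<in> N\<^sub>2\<close> with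
  \<open>I\<^sub>i x \<subseteq> Q\<close> and \<open>B\<^sub>k\<close> the set of \<open>x \<in> N\<^sub>2\<close> sent into \<open>Q\<close> by all products of elements of
  \<open>I\<^sub>1, \<dots>, I\<^sub>k\<close>. These are subhypergroups, \<open>B\<^sub>n\<^sub>-\<^sub>1 = N\<^sub>2\<close>, and classical primeness gives
  \<open>B\<^sub>k\<^sub>+\<^sub>1 \<subseteq> B\<^sub>k \<union> A\<^sub>k\<close>. As a subhypergroup is never the union of two proper ones, descending
  the chain yields some \<open>A\<^sub>i = N\<^sub>2\<close>.

  Conversely, if \<open>g(r\<^sub>1, \<dots>, r\<^sub>n\<^sub>-\<^sub>1, a) \<subseteq> Q\<close>, apply the criterion to \<open>N\<^sub>1 = Q\<close>, the principal
  hyperideals \<open>I\<^sub>i = r\<^sub>i R\<close> and \<open>N\<^sub>2 = {x. (r\<^sub>1 \<cdot> \<dots> \<cdot> r\<^sub>n\<^sub>-\<^sub>1) x \<subseteq> Q}\<close>, which contains \<open>a\<close>.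
\<close>

section \<open>Subhypergroups of canonical hypergroups\<close>

lemma list_all2_mem_replicate_singleton:
  "list_all2 (\<lambda>x A. x \<in> A) xs (replicate k {a}) \<longleftrightarrow> xs = replicate k a"
  by (induction k arbitrary: xs) (auto simp: list_all2_Cons2)

lemma mem_hlift_pair:
  "w \<in> hlift F ([A, B] @ replicate k {z}) \<longleftrightarrow> (\<exists>a\<in>A. \<exists>b\<in>B. w \<in> F (a # b # replicate k z))"
  unfolding hlift_def by (auto simp: list_all2_Cons2 list_all2_mem_replicate_singleton) blast

lemma mem_gset:
  "w \<in> gset g As X \<longleftrightarrow> (\<exists>rs x. list_all2 (\<lambda>r A. r \<in> A) rs As \<and> x \<in> X \<and> w \<in> g rs x)"
  unfolding gset_def by blast

lemma mem_gset_singletons: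
  "w \<in> gset g (I # replicate k {a}) X \<longleftrightarrow> (\<exists>t\<in>I. \<exists>x\<in>X. w \<in> g (t # replicate k a) x)"
  unfolding gset_def by (auto simp: list_all2_Cons2 list_all2_mem_replicate_singleton)

lemma hyperideal_nonempty: "hyperideal m n f' g' I \<Longrightarrow> I \<noteq> {}"
  unfolding hyperideal_def sub_hypergroup_def by blast

locale canonical_hgroup =
  fixes m :: nat and F :: "'a list \<Rightarrow> 'a set" and z :: 'a
  assumes canonical: "canonical_hypergroup m F z"
begin

abbreviation hneg :: "'a \<Rightarrow> 'a" where
  "hneg \<equiv> hinv m F z"

lemma arity_ge_2: "2 \<le> m"
  using canonical unfolding canonical_hypergroup_def by blast

lemma Suc_Suc_arity_minus_2 [simp]: "Suc (Suc (m - 2)) = m"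
  using arity_ge_2 by arith

lemma F_nonempty: "length xs = m \<Longrightarrow> F xs \<noteq> {}"
  using canonical unfolding canonical_hypergroup_def hsemihypergroup_def hyperop_def by blast

lemma F_commute: "length xs = m \<Longrightarrow> mset xs = mset ys \<Longrightarrow> F xs = F ys"
  using canonical unfolding canonical_hypergroup_def hcomm_def by blast

lemma F_reversible:
  "length xs = m \<Longrightarrow> x \<in> F xs \<Longrightarrow> i < m \<Longrightarrow>
     xs ! i \<in> F (x # map hneg (take i xs @ drop (Suc i) xs))"
  using canonical unfolding canonical_hypergroup_def by blast

lemma F_zeros_right: "F (x # z # replicate (m - 2) z) = {x}"
proof -
  have "z # replicate (m - 2) z = replicate (m - 1) z"
    using arity_ge_2 by (simp add: Suc_diff_Suc numeral_2_eq_2 flip: replicate_Suc)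
  then show ?thesis
    using canonical unfolding canonical_hypergroup_def by simp
qed

lemma F_zeros_left: "F (z # x # replicate (m - 2) z) = {x}"
  using F_commute[of "x # z # replicate (m - 2) z" "z # x # replicate (m - 2) z"] arity_ge_2
    F_zeros_right by simp

lemma ex1_hneg: "\<exists>!y. z \<in> F (x # y # replicate (m - 2) z)"
  using canonical unfolding canonical_hypergroup_def by blast

lemma zero_mem_F_hneg: "z \<in> F (x # hneg x # replicate (m - 2) z)"
  unfolding hinv_def by (rule theI'[OF ex1_hneg])

lemma hneg_unique: "z \<in> F (x # y # replicate (m - 2) z) \<Longrightarrow> hneg x = y"
  using ex1_hneg[of x] zero_mem_F_hneg[of x] by blast

lemma hneg_zero: "hneg z = z"
  by (rule hneg_unique) (simp add: F_zeros_right)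

lemma hneg_hneg: "hneg (hneg x) = x"
proof (rule hneg_unique)
  show "z \<in> F (hneg x # x # replicate (m - 2) z)"
    using F_commute[of "hneg x # x # replicate (m - 2) z" "x # hneg x # replicate (m - 2) z"]
      arity_ge_2 zero_mem_F_hneg by simp
qed

definition hsubgroup :: "'a set \<Rightarrow> bool" where
  "hsubgroup N \<longleftrightarrow> z \<in> N \<and> (\<forall>xs. length xs = m \<longrightarrow> set xs \<subseteq> N \<longrightarrow> F xs \<subseteq> N) \<and>
     (\<forall>x\<in>N. hneg x \<in> N)"

lemma hsubgroup_F_subset: "hsubgroup N \<Longrightarrow> length xs = m \<Longrightarrow> set xs \<subseteq> N \<Longrightarrow> F xs \<subseteq> N"
  unfolding hsubgroup_def by blast

lemma hsubgroup_UNIV: "hsubgroup UNIV"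
  unfolding hsubgroup_def by simp

lemma hsubgroup_imp_sub_hypergroup:
  assumes N: "hsubgroup N"
  shows "sub_hypergroup m F N"
  unfolding sub_hypergroup_def
proof (intro conjI allI impI)
  show "N \<noteq> {}" and "\<And>xs. length xs = m \<Longrightarrow> set xs \<subseteq> N \<Longrightarrow> F xs \<subseteq> N"
    using N unfolding hsubgroup_def by auto
  fix xs i assume len: "length xs = m - 1" and xs: "set xs \<subseteq> N" and i: "i < m"
  have len_ins: "length (take i xs @ y # drop i xs) = m" for y
    using len i arity_ge_2 by auto
  show "(\<Union>y\<in>N. F (take i xs @ y # drop i xs)) = N"
  proof
    show "(\<Union>y\<in>N. F (take i xs @ y # drop i xs)) \<subseteq> N"
      using xs hsubgroup_F_subset[OF N len_ins] by (auto dest: in_set_takeD in_set_dropD)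
    show "N \<subseteq> (\<Union>y\<in>N. F (take i xs @ y # drop i xs))"
    proof
      fix w assume w: "w \<in> N"
      have len_w: "length (w # map hneg xs) = m"
        using len arity_ge_2 by auto
      then obtain y where y: "y \<in> F (w # map hneg xs)"
        using F_nonempty by blast
      have "y \<in> N"
        using y hsubgroup_F_subset[OF N len_w] w xs N unfolding hsubgroup_def by auto
      moreover have "w \<in> F (y # xs)"
        using F_reversible[OF len_w y, of 0] arity_ge_2 by (simp add: hneg_hneg comp_def)
      moreover have "F (y # xs) = F (take i xs @ y # drop i xs)"
        using len arity_ge_2 by (intro F_commute)
          (simp_all, metis append_take_drop_id mset_append mset.simps(2) union_mset_add_mset_right)
      ultimately show "w \<in> (\<Union>y\<in>N. F (take i xs @ y # drop i xs))"
        by blast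
    qed
  qed
qed

lemma hsubgroup_iff: "hsubgroup N \<longleftrightarrow> sub_hypergroup m F N \<and> z \<in> N"
proof
  assume "sub_hypergroup m F N \<and> z \<in> N"
  then have N: "sub_hypergroup m F N" and z: "z \<in> N"
    by blast+
  have "hneg x \<in> N" if x: "x \<in> N" for x
  proof -
    have reproduction: "\<And>xs i. length xs = m - 1 \<Longrightarrow> set xs \<subseteq> N \<Longrightarrow> i < m \<Longrightarrow>
        (\<Union>y\<in>N. F (take i xs @ y # drop i xs)) = N"
      using N unfolding sub_hypergroup_def by blast
    have "(\<Union>y\<in>N. F (take 1 (x # replicate (m - 2) z) @ y # drop 1 (x # replicate (m - 2) z))) = N"
      by (rule reproduction) (use x z arity_ge_2 in auto)
    then have "(\<Union>y\<in>N. F (x # y # replicate (m - 2) z)) = N"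
      by simp
    then obtain y where "y \<in> N" "z \<in> F (x # y # replicate (m - 2) z)"
      using z by blast
    then show ?thesis
      using hneg_unique by simp
  qed
  then show "hsubgroup N"
    using N z unfolding hsubgroup_def sub_hypergroup_def by blast
qed (auto intro: hsubgroup_imp_sub_hypergroup simp: hsubgroup_def)

lemma hlift_subset:
  assumes Q: "hsubgroup Q" and len: "length As = m" and As: "\<forall>A\<in>set As. A \<subseteq> Q"
  shows "hlift F As \<subseteq> Q"
proof
  fix w assume "w \<in> hlift F As"
  then obtain xs where xs: "list_all2 (\<lambda>x A. x \<in> A) xs As" and w: "w \<in> F xs"
    unfolding hlift_def by blast
  have "length xs = m"
    using xs len by (simp add: list_all2_lengthD)
  moreover have "set xs \<subseteq> Q"
    using xs As by (fastforce simp: list_all2_conv_all_nth in_set_conv_nth)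
  ultimately show "w \<in> Q"
    using w hsubgroup_F_subset[OF Q] by blast
qed

lemma hlift_pair_subset_iff:
  assumes Q: "hsubgroup Q" and "z \<in> A" and "z \<in> B"
  shows "hlift F ([A, B] @ replicate (m - 2) {z}) \<subseteq> Q \<longleftrightarrow> A \<subseteq> Q \<and> B \<subseteq> Q"
proof
  assume sub: "hlift F ([A, B] @ replicate (m - 2) {z}) \<subseteq> Q"
  have "a \<in> Q" if "a \<in> A" for a
    using sub \<open>z \<in> B\<close> that F_zeros_right[of a] unfolding mem_hlift_pair subset_iff by blast
  moreover have "b \<in> Q" if "b \<in> B" for b
    using sub \<open>z \<in> A\<close> that F_zeros_left[of b] unfolding mem_hlift_pair subset_iff by blast
  ultimately show "A \<subseteq> Q \<and> B \<subseteq> Q"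
    by blast
next
  assume "A \<subseteq> Q \<and> B \<subseteq> Q"
  moreover have "z \<in> Q"
    using Q unfolding hsubgroup_def by blast
  ultimately show "hlift F ([A, B] @ replicate (m - 2) {z}) \<subseteq> Q"
    using arity_ge_2 by (intro hlift_subset[OF Q]) auto
qed

lemma hsubgroup_Un_imp_subset:
  assumes A: "hsubgroup A" and B: "hsubgroup B" and AB: "hsubgroup (A \<union> B)"
  shows "A \<subseteq> B \<or> B \<subseteq> A"
proof (rule ccontr)
  assume "\<not> (A \<subseteq> B \<or> B \<subseteq> A)"
  then obtain a b where a: "a \<in> A" "a \<notin> B" and b: "b \<in> B" "b \<notin> A"
    by blast
  define xs where "xs = a # b # replicate (m - 2) z"
  have len: "length xs = m"
    unfolding xs_def by simp
  then obtain c where c: "c \<in> F xs"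
    using F_nonempty by blast
  have "set xs \<subseteq> A \<union> B"
    using a b A unfolding xs_def hsubgroup_def by auto
  then have "c \<in> A \<union> B"
    using c hsubgroup_F_subset[OF AB len] by blast
  then show False
  proof
    assume "c \<in> A"
    then have "set (c # hneg a # replicate (m - 2) z) \<subseteq> A"
      using a A unfolding hsubgroup_def by auto
    moreover have "b \<in> F (c # hneg a # replicate (m - 2) z)"
      using F_reversible[OF len c, of 1] arity_ge_2 by (simp add: xs_def hneg_zero)
    ultimately show False
      using b hsubgroup_F_subset[OF A, of "c # hneg a # replicate (m - 2) z"] by auto
  next
    assume "c \<in> B"
    then have "set (c # hneg b # replicate (m - 2) z) \<subseteq> B"
      using b B unfolding hsubgroup_def by auto
    moreover have "a \<in> F (c # hneg b # replicate (m - 2) z)"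
      using F_reversible[OF len c, of 0] arity_ge_2 by (simp add: xs_def hneg_zero)
    ultimately show False
      using a hsubgroup_F_subset[OF B, of "c # hneg b # replicate (m - 2) z"] by auto
  qed
qed

text \<open>Three proper subgroups can cover a group (Klein four-group), so covers are only ever
  split into two pieces, along a chain.\<close>

lemma hsubgroup_chain_cover:
  assumes "hsubgroup N"
    and A: "\<And>i. hsubgroup (A i) \<and> A i \<subseteq> N" and B: "\<And>i. hsubgroup (B i) \<and> B i \<subseteq> N"
    and chain: "\<And>j. j < k \<Longrightarrow> B (Suc j) \<subseteq> B j \<union> A j" and "B k = N"
  shows "B 0 = N \<or> (\<exists>i<k. A i = N)"
  using chain \<open>B k = N\<close>
proof (induction k)
  case (Suc k)
  then have "B k \<union> A k = N"
    using A[of k] B[of k] by blast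
  then have "A k \<subseteq> B k \<or> B k \<subseteq> A k"
    using hsubgroup_Un_imp_subset A B \<open>hsubgroup N\<close> by metis
  then have "B k = N \<or> A k = N"
    using \<open>B k \<union> A k = N\<close> by blast
  then show ?case
    using Suc by (metis less_Suc_eq)
qed simp

end

section \<open>Scalars acting through binary products\<close>

locale hmodule =
  fixes m n :: nat and f' :: "'r list \<Rightarrow> 'r set" and g' :: "'r list \<Rightarrow> 'r"
    and zr one :: 'r and f :: "'m list \<Rightarrow> 'm set" and g :: "'r list \<Rightarrow> 'm \<Rightarrow> 'm set"
    and zm :: 'm
  assumes hypermodule: "hypermodule m n f' g' zr one f g zm"
begin

lemma
  shows arity_n_ge_2: "2 \<le> n"
    and canonical_hypergroup_R: "canonical_hypergroup m f' zr"
    and g'_commute [rule_format]: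
      "\<forall>xs ys. length xs = n \<longrightarrow> mset xs = mset ys \<longrightarrow> g' xs = g' ys"
    and g'_assoc [rule_format]:
      "\<forall>xs. length xs = 2 * n - 1 \<longrightarrow> (\<forall>i<n. \<forall>j<n.
         g' (take i xs @ g' (take n (drop i xs)) # drop (i + n) xs) =
         g' (take j xs @ g' (take n (drop j xs)) # drop (j + n) xs))"
    and g'_distrib [rule_format]:
      "\<forall>xs ys i. length xs = n \<longrightarrow> length ys = m \<longrightarrow> i < n \<longrightarrow>
         (\<lambda>y. g' (xs[i := y])) ` f' ys = f' (map (\<lambda>y. g' (xs[i := y])) ys)"
    and g'_zero [rule_format]: "\<forall>xs i. length xs = n \<longrightarrow> i < n \<longrightarrow> g' (xs[i := zr]) = zr"
    and g'_ones [rule_format]: "\<forall>x. g' (x # replicate (n - 1) one) = x"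
  by (insert hypermodule,
      unfold hypermodule_def krasner_hyperring_def hcomm_def nary_semigroup_def,
      (elim conjE; assumption)+)

lemma
  shows canonical_hypergroup_M: "canonical_hypergroup m f zm"
    and g_f_distrib [rule_format]:
      "\<forall>rs xs. length rs = n - 1 \<longrightarrow> length xs = m \<longrightarrow>
         (\<Union>y\<in>f xs. g rs y) = hlift f (map (g rs) xs)"
    and g_f'_distrib [rule_format]:
      "\<forall>rs i ss x. length rs = n - 1 \<longrightarrow> i < n - 1 \<longrightarrow> length ss = m \<longrightarrow>
         (\<Union>s\<in>f' ss. g (rs[i := s]) x) = hlift f (map (\<lambda>s. g (rs[i := s]) x) ss)"
    and g_assoc [rule_format]:
      "\<forall>rs i x. length rs = 2 * n - 2 \<longrightarrow> i < n - 1 \<longrightarrow>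
         g (take i rs @ g' (take n (drop i rs)) # drop (i + n) rs) x =
         (\<Union>y\<in>g (drop (n - 1) rs) x. g (take (n - 1) rs) y)"
    and g_zero_scalar [rule_format]:
      "\<forall>rs i x. length rs = n - 1 \<longrightarrow> i < n - 1 \<longrightarrow> g (rs[i := zr]) x = {zm}"
    and g_ones [rule_format]: "\<forall>x. g (replicate (n - 1) one) x = {x}"
    and g_zero [rule_format]: "\<forall>rs. length rs = n - 1 \<longrightarrow> g rs zm = {zm}"
  by (insert hypermodule, unfold hypermodule_def, (elim conjE; assumption)+)

sublocale R: canonical_hgroup m f' zr
  by unfold_locales (rule canonical_hypergroup_R)

sublocale M: canonical_hgroup m f zm
  by unfold_locales (rule canonical_hypergroup_M)

definition mul :: "'r \<Rightarrow> 'r \<Rightarrow> 'r" where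
  "mul a b = g' (a # b # replicate (n - 2) one)"

definition act :: "'r \<Rightarrow> 'm \<Rightarrow> 'm set" where
  "act r x = g (r # replicate (n - 2) one) x"

text \<open>Only meaningful for lists of length at most \<open>n\<close>: the padding \<open>n - length rs\<close> truncates.\<close>

definition mul_list :: "'r list \<Rightarrow> 'r" where
  "mul_list rs = g' (rs @ replicate (n - length rs) one)"

lemma n_eq_Suc_Suc: obtains k where "n = Suc (Suc k)"
  using arity_n_ge_2 by (metis add_2_eq_Suc le_Suc_ex)

lemma mul_commute: "mul a b = mul b a"
  unfolding mul_def by (rule g'_commute) (use arity_n_ge_2 in auto)

lemma mul_one_left: "mul one x = x"
proof -
  obtain k where k: "n = Suc (Suc k)" by (rule n_eq_Suc_Suc)
  have "mul one x = g' (x # replicate (n - 1) one)"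
    unfolding mul_def by (rule g'_commute) (auto simp: k)
  then show ?thesis
    using g'_ones by simp
qed

lemma mul_zero_right: "mul x zr = zr"
  using g'_zero[of "x # one # replicate (n - 2) one" 1] arity_n_ge_2 by (simp add: mul_def)

lemma mul_assoc: "mul (mul a b) c = mul a (mul b c)"
proof -
  obtain k where k: "n = Suc (Suc k)" by (rule n_eq_Suc_Suc)
  define xs where "xs = a # b # replicate k one @ c # replicate k one"
  have "g' (take 0 xs @ g' (take n (drop 0 xs)) # drop (0 + n) xs) =
      g' (take 1 xs @ g' (take n (drop 1 xs)) # drop (1 + n) xs)"
    by (rule g'_assoc) (auto simp: xs_def k)
  then have "g' (g' (a # b # replicate k one) # c # replicate k one) =
      g' (a # g' (b # replicate k one @ [c]) # replicate k one)"
    by (simp add: xs_def k)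
  moreover have "g' (b # replicate k one @ [c]) = mul b c"
    unfolding mul_def by (rule g'_commute) (auto simp: k)
  ultimately show ?thesis
    unfolding mul_def by (simp add: k)
qed

lemma g'_Cons: assumes "length rs = n - 1" shows "g' (a # rs) = mul a (g' (one # rs))"
proof -
  obtain k where k: "n = Suc (Suc k)" by (rule n_eq_Suc_Suc)
  define xs where "xs = (a # replicate k one) @ (one # rs)"
  have "g' (take 0 xs @ g' (take n (drop 0 xs)) # drop (0 + n) xs) =
      g' (take (n - 1) xs @ g' (take n (drop (n - 1) xs)) # drop ((n - 1) + n) xs)"
    by (rule g'_assoc) (use assms in \<open>auto simp: xs_def k\<close>)
  then have "g' (g' (a # replicate (Suc k) one) # rs) = g' (a # replicate k one @ [g' (one # rs)])"
    using assms by (simp add: xs_def k replicate_append_same)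
  moreover have "g' (a # replicate (Suc k) one) = a"
    using g'_ones by (simp add: k)
  moreover have "g' (a # replicate k one @ [g' (one # rs)]) = mul a (g' (one # rs))"
    unfolding mul_def by (rule g'_commute) (auto simp: k)
  ultimately show ?thesis
    by simp
qed

lemma mul_list_Nil: "mul_list [] = one"
  using g'_ones[of one] arity_n_ge_2 by (simp add: mul_list_def flip: replicate_Suc)

lemma mul_list_Cons: assumes "length rs < n" shows "mul_list (a # rs) = mul a (mul_list rs)"
proof -
  have "mul_list (a # rs) = g' (a # (rs @ replicate (n - Suc (length rs)) one))"
    unfolding mul_list_def by simp
  also have "\<dots> = mul a (g' (one # rs @ replicate (n - Suc (length rs)) one))"
    by (rule g'_Cons) (use assms in auto)
  also have "g' (one # rs @ replicate (n - Suc (length rs)) one) = mul_list rs"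
    unfolding mul_list_def
  proof (rule g'_commute)
    have "n - length rs = Suc (n - Suc (length rs))"
      using assms by simp
    then show "mset (one # rs @ replicate (n - Suc (length rs)) one) =
        mset (rs @ replicate (n - length rs) one)"
      by simp
  qed (use assms in simp)
  finally show ?thesis .
qed

lemma mul_list_perm: "mset rs = mset ss \<Longrightarrow> length rs \<le> n \<Longrightarrow> mul_list rs = mul_list ss"
  unfolding mul_list_def by (metis g'_commute length_append length_replicate le_add_diff_inverse
      mset_append size_mset)

lemma mul_list_append_ones:
  "length rs + k \<le> n \<Longrightarrow> mul_list (rs @ replicate k one) = mul_list rs"
  unfolding mul_list_def by (simp add: replicate_add[symmetric])

lemma g_eq_act_mul_list: assumes "length rs = n - 1" shows "g rs x = act (mul_list rs) x"
proof -
  obtain k where k: "n = Suc (Suc k)" by (rule n_eq_Suc_Suc)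
  define xs where "xs = rs @ replicate (n - 1) one"
  have "g (take 0 xs @ g' (take n (drop 0 xs)) # drop (0 + n) xs) x =
        (\<Union>y\<in>g (drop (n - 1) xs) x. g (take (n - 1) xs) y)"
    by (rule g_assoc) (use assms in \<open>auto simp: xs_def k\<close>)
  moreover have "take n xs = rs @ [one]" "drop n xs = replicate k one"
    "drop (n - 1) xs = replicate (n - 1) one" "take (n - 1) xs = rs"
    using assms by (auto simp: xs_def k)
  ultimately have "g (g' (rs @ [one]) # replicate k one) x = g rs x"
    using g_ones by simp
  moreover have "mul_list rs = g' (rs @ [one])"
    unfolding mul_list_def using assms by (simp add: k)
  ultimately show ?thesis
    unfolding act_def by (simp add: k)
qed

lemma act_mul: "act (mul a b) x = (\<Union>y\<in>act b x. act a y)"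
proof -
  obtain k where k: "n = Suc (Suc k)" by (rule n_eq_Suc_Suc)
  define xs where "xs = (a # replicate k one) @ (b # replicate k one)"
  have "g (take 0 xs @ g' (take n (drop 0 xs)) # drop (0 + n) xs) x =
        (\<Union>y\<in>g (drop (n - 1) xs) x. g (take (n - 1) xs) y)"
    by (rule g_assoc) (auto simp: xs_def k)
  moreover have "take n xs = a # replicate k one @ [b]" "drop n xs = replicate k one"
    "drop (n - 1) xs = b # replicate k one" "take (n - 1) xs = a # replicate k one"
    by (auto simp: xs_def k)
  moreover have "g' (a # replicate k one @ [b]) = mul a b"
    unfolding mul_def by (rule g'_commute) (auto simp: k)
  ultimately show ?thesis
    unfolding act_def by (simp add: k)
qed

lemma act_one: "act one x = {x}"
proof -
  have "Suc (n - 2) = n - 1"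
    using arity_n_ge_2 by arith
  then show ?thesis
    using g_ones[of x] by (simp add: act_def flip: replicate_Suc)
qed

lemma act_zero: "act r zm = {zm}"
  unfolding act_def by (rule g_zero) (use arity_n_ge_2 in auto)

lemma act_zero_scalar: "act zr x = {zm}"
  using g_zero_scalar[of "one # replicate (n - 2) one" 0] arity_n_ge_2 by (simp add: act_def)

lemma act_f_distrib: "length xs = m \<Longrightarrow> (\<Union>y\<in>f xs. act r y) = hlift f (map (act r) xs)"
  unfolding act_def by (rule g_f_distrib) (use arity_n_ge_2 in auto)

lemma hneg_mem_act: "M.hneg x \<in> act (R.hneg one) x"
proof -
  \<comment> \<open>distribute \<open>0 \<in> 1 + (-1)\<close> over \<open>x\<close>: \<open>0 \<in> x + (-1) x\<close>, and inverses are unique\<close>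
  obtain k where k: "m = Suc (Suc k)"
    using R.arity_ge_2 by (metis add_2_eq_Suc le_Suc_ex)
  define ss where "ss = one # R.hneg one # replicate k zr"
  have "(\<Union>s\<in>f' ss. g ((replicate (n - 1) one)[0 := s]) x) =
      hlift f (map (\<lambda>s. g ((replicate (n - 1) one)[0 := s]) x) ss)"
    by (rule g_f'_distrib) (use arity_n_ge_2 in \<open>auto simp: ss_def k\<close>)
  moreover have "(replicate (n - 1) one)[0 := s] = s # replicate (n - 2) one" for s
    using arity_n_ge_2 by (cases n; cases "n - 1") auto
  ultimately have distrib: "(\<Union>s\<in>f' ss. act s x) = hlift f (map (\<lambda>s. act s x) ss)"
    unfolding act_def by simp
  have "zr \<in> f' ss"
    using R.zero_mem_F_hneg[of one] by (simp add: ss_def k)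
  then have "zm \<in> hlift f (map (\<lambda>s. act s x) ss)"
    using distrib act_zero_scalar by blast
  then have "zm \<in> hlift f ([{x}, act (R.hneg one) x] @ replicate k {zm})"
    by (simp add: ss_def act_one act_zero_scalar map_replicate_const)
  then obtain y where "y \<in> act (R.hneg one) x" "zm \<in> f (x # y # replicate k zm)"
    unfolding mem_hlift_pair by auto
  moreover have "M.hneg x = y"
    by (rule M.hneg_unique) (use calculation in \<open>simp add: k\<close>)
  ultimately show ?thesis
    by simp
qed

lemma subhypermodule_g_subset:
  assumes "subhypermodule m n f g N" and "x \<in> N" and "length rs = n - 1"
  shows "g rs x \<subseteq> N"
proof -
  have "list_all2 (\<lambda>r A. r \<in> A) rs (replicate (n - 1) UNIV)"
    using assms(3) by (simp add: list_all2_conv_all_nth)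
  then have "g rs x \<subseteq> gset g (replicate (n - 1) UNIV) N"
    using assms(2) unfolding gset_def by blast
  then show ?thesis
    using assms(1) unfolding subhypermodule_def by blast
qed

lemma subhypermodule_act_subset: "subhypermodule m n f g N \<Longrightarrow> x \<in> N \<Longrightarrow> act r x \<subseteq> N"
  unfolding act_def by (rule subhypermodule_g_subset) (use arity_n_ge_2 in auto)

lemma zero_mem_subhypermodule:
  assumes "subhypermodule m n f g N"
  shows "zm \<in> N"
proof -
  obtain x where "x \<in> N"
    using assms unfolding subhypermodule_def sub_hypergroup_def by blast
  then show ?thesis
    using subhypermodule_act_subset[OF assms, of x zr] act_zero_scalar by simp
qed

lemma subhypermodule_imp_hsubgroup: "subhypermodule m n f g N \<Longrightarrow> M.hsubgroup N"
  using M.hsubgroup_iff zero_mem_subhypermodule unfolding subhypermodule_def by blast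

lemma subhypermodule_UNIV: "subhypermodule m n f g UNIV"
  unfolding subhypermodule_def using M.hsubgroup_imp_sub_hypergroup[OF M.hsubgroup_UNIV] by simp

lemma zero_mem_gset:
  assumes "length Is = n - 1" and "\<forall>I\<in>set Is. I \<noteq> {}" and "zm \<in> X"
  shows "zm \<in> gset g Is X"
proof -
  define rs where "rs = map (\<lambda>I. SOME r. r \<in> I) Is"
  have "list_all2 (\<lambda>r I. r \<in> I) rs Is"
    using assms(2) unfolding rs_def list_all2_conv_all_nth by (simp add: some_in_eq)
  moreover have "length rs = n - 1"
    using assms(1) unfolding rs_def by simp
  ultimately show ?thesis
    using assms(3) g_zero unfolding mem_gset by blast
qed

lemma act_subset_after_act:
  assumes Q: "subhypermodule m n f g Q" and "act c x \<subseteq> Q" and "y \<in> act d x"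
  shows "act c y \<subseteq> Q"
proof -
  have "act c y \<subseteq> act (mul c d) x"
    using assms(3) act_mul by blast
  also have "\<dots> = (\<Union>z\<in>act c x. act d z)"
    by (metis act_mul mul_commute)
  also have "\<dots> \<subseteq> Q"
    using assms(2) subhypermodule_act_subset[OF Q] by blast
  finally show ?thesis .
qed

lemma act_mul_list_subset:
  assumes Q: "subhypermodule m n f g Q" and a: "a \<in> set rs" and len: "length rs \<le> n"
    and "act a x \<subseteq> Q"
  shows "act (mul_list rs) x \<subseteq> Q"
proof -
  have "mul_list rs = mul_list (a # remove1 a rs)"
    using a len by (intro mul_list_perm) auto
  also have "\<dots> = mul (mul_list (remove1 a rs)) a"
  proof -
    have "length rs - 1 < n"
      using len length_pos_if_in_set[OF a] by linarith
    then have "length (remove1 a rs) < n"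
      by (simp add: length_remove1 a)
    then show ?thesis
      by (simp add: mul_list_Cons mul_commute)
  qed
  finally have "act (mul_list rs) x = (\<Union>y\<in>act a x. act (mul_list (remove1 a rs)) y)"
    by (simp add: act_mul)
  then show ?thesis
    using assms(4) subhypermodule_act_subset[OF Q] by blast
qed

definition colon :: "'m set \<Rightarrow> 'm set \<Rightarrow> 'r set \<Rightarrow> 'm set" where
  "colon Q N C = {x \<in> N. \<forall>c\<in>C. act c x \<subseteq> Q}"

lemma hsubgroup_colon:
  assumes Q: "subhypermodule m n f g Q" and N: "M.hsubgroup N"
  shows "M.hsubgroup (colon Q N C)"
  unfolding M.hsubgroup_def
proof (intro conjI allI impI ballI)
  show "zm \<in> colon Q N C"
    using N zero_mem_subhypermodule[OF Q] act_zero unfolding colon_def M.hsubgroup_def by auto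
next
  fix xs assume len: "length xs = m" and xs: "set xs \<subseteq> colon Q N C"
  show "f xs \<subseteq> colon Q N C"
  proof
    fix w assume w: "w \<in> f xs"
    have "w \<in> N"
      using M.hsubgroup_F_subset[OF N len] xs w unfolding colon_def by blast
    moreover have "act c w \<subseteq> Q" if "c \<in> C" for c
    proof -
      have "act c w \<subseteq> hlift f (map (act c) xs)"
        using w act_f_distrib[OF len] by blast
      also have "\<dots> \<subseteq> Q"
        using subhypermodule_imp_hsubgroup[OF Q] len xs that
        by (intro M.hlift_subset) (auto simp: colon_def)
      finally show ?thesis .
    qed
    ultimately show "w \<in> colon Q N C"
      unfolding colon_def by blast
  qed
next
  fix x assume x: "x \<in> colon Q N C"
  then have "M.hneg x \<in> N"
    using N unfolding colon_def M.hsubgroup_def by blast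
  moreover have "act c (M.hneg x) \<subseteq> Q" if "c \<in> C" for c
    using act_subset_after_act[OF Q _ hneg_mem_act] x that unfolding colon_def by blast
  ultimately show "M.hneg x \<in> colon Q N C"
    unfolding colon_def by blast
qed

lemma subhypermodule_colon:
  assumes Q: "subhypermodule m n f g Q" and N: "subhypermodule m n f g N"
  shows "subhypermodule m n f g (colon Q N C)"
  unfolding subhypermodule_def
proof
  show "sub_hypergroup m f (colon Q N C)"
    using hsubgroup_colon[OF Q subhypermodule_imp_hsubgroup[OF N]] M.hsubgroup_iff by blast
  show "gset g (replicate (n - 1) UNIV) (colon Q N C) \<subseteq> colon Q N C"
  proof
    fix y assume "y \<in> gset g (replicate (n - 1) UNIV) (colon Q N C)"
    then obtain rs x where rs: "list_all2 (\<lambda>r A. r \<in> A) rs (replicate (n - 1) UNIV)"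
      and x: "x \<in> colon Q N C" and y: "y \<in> g rs x"
      unfolding mem_gset by blast
    have len: "length rs = n - 1"
      using rs by (simp add: list_all2_lengthD)
    have "y \<in> N"
      using subhypermodule_g_subset[OF N _ len] x y unfolding colon_def by blast
    moreover have "y \<in> act (mul_list rs) x"
      using y g_eq_act_mul_list[OF len] by simp
    ultimately show "y \<in> colon Q N C"
      using act_subset_after_act[OF Q] x unfolding colon_def by blast
  qed
qed

section \<open>Classical prime subhypermodules\<close>

lemma classical_prime_act_snoc:
  assumes cp: "classical_prime m n f g one Q" and len: "length rs < n - 1"
    and sub: "act (mul_list (rs @ [t])) x \<subseteq> Q"
  shows "act (mul_list rs) x \<subseteq> Q \<or> act t x \<subseteq> Q"
proof -
  have Q: "subhypermodule m n f g Q"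
    using cp unfolding classical_prime_def by blast
  define L where "L = rs @ [t] @ replicate (n - 2 - length rs) one"
  have len_L: "length L = n - 1"
    using len unfolding L_def by simp
  have "mul_list L = mul_list (rs @ [t])"
    using mul_list_append_ones[of "rs @ [t]" "n - 2 - length rs"] len unfolding L_def by simp
  then have "g L x \<subseteq> Q"
    using sub g_eq_act_mul_list[OF len_L] by simp
  then obtain j where j: "j < n - 1" and sub_j: "act (L ! j) x \<subseteq> Q"
    using cp len_L unfolding classical_prime_def act_def by blast
  have "L ! j \<in> set L"
    using j len_L by simp
  then consider "L ! j \<in> set rs" | "L ! j = t" | "L ! j = one"
    unfolding L_def by (auto simp: in_set_replicate)
  then show ?thesis
  proof cases
    case 1
    then show ?thesis
      using act_mul_list_subset[OF Q 1 _ sub_j] len by simp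
  next
    case 2
    then show ?thesis
      using sub_j by simp
  next
    case 3
    then have "x \<in> Q"
      using sub_j act_one by simp
    then show ?thesis
      using subhypermodule_act_subset[OF Q] by blast
  qed
qed

definition products :: "'r set list \<Rightarrow> 'r set" where
  "products Is = mul_list ` {rs. list_all2 (\<lambda>r I. r \<in> I) rs Is}"

lemma colon_products_Nil: "colon Q N (products []) = N \<inter> Q"
  unfolding colon_def products_def by (auto simp: mul_list_Nil act_one)

lemma colon_products_eq:
  assumes len: "length Is = n - 1" and sub: "gset g Is N \<subseteq> Q"
  shows "colon Q N (products Is) = N"
proof -
  have "act (mul_list rs) x \<subseteq> Q" if rs: "list_all2 (\<lambda>r I. r \<in> I) rs Is" and x: "x \<in> N" for rs x
  proof -
    have "length rs = n - 1"
      using rs len by (simp add: list_all2_lengthD)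
    moreover have "g rs x \<subseteq> gset g Is N"
      using rs x unfolding gset_def by blast
    ultimately show ?thesis
      using sub g_eq_act_mul_list by auto
  qed
  then show ?thesis
    unfolding colon_def products_def by auto
qed

lemma colon_products_snoc_subset:
  assumes cp: "classical_prime m n f g one Q" and len: "length Is < n - 1"
  shows "colon Q N (products (Is @ [I])) \<subseteq> colon Q N (products Is) \<union> colon Q N I"
proof
  fix x assume x: "x \<in> colon Q N (products (Is @ [I]))"
  show "x \<in> colon Q N (products Is) \<union> colon Q N I"
  proof (cases "x \<in> colon Q N I")
    case False
    then obtain t where t: "t \<in> I" and not_sub: "\<not> act t x \<subseteq> Q"
      using x unfolding colon_def by blast
    have "act (mul_list rs) x \<subseteq> Q" if rs: "list_all2 (\<lambda>r I. r \<in> I) rs Is" for rs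
    proof -
      have "list_all2 (\<lambda>r I. r \<in> I) (rs @ [t]) (Is @ [I])"
        using rs t by (simp add: list_all2_appendI)
      then have "act (mul_list (rs @ [t])) x \<subseteq> Q"
        using x unfolding colon_def products_def by blast
      moreover have "length rs < n - 1"
        using rs len by (simp add: list_all2_lengthD)
      ultimately show ?thesis
        using classical_prime_act_snoc[OF cp] not_sub by blast
    qed
    then show ?thesis
      using x unfolding colon_def products_def by blast
  qed simp
qed

lemma classical_prime_gset_subset:
  assumes cp: "classical_prime m n f g one Q" and N: "M.hsubgroup N"
    and len: "length Is = n - 1" and sub: "gset g Is N \<subseteq> Q"
  shows "\<exists>i<n - 1. gset g (Is ! i # replicate (n - 2) {one}) N \<subseteq> Q"
proof -
  have Q: "subhypermodule m n f g Q"
    using cp unfolding classical_prime_def by blast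
  define A where "A i = colon Q N (Is ! i)" for i
  define B where "B k = colon Q N (products (take k Is))" for k
  have A: "M.hsubgroup (A i) \<and> A i \<subseteq> N" for i
    unfolding A_def by (intro conjI hsubgroup_colon[OF Q N]) (auto simp: colon_def)
  have B: "M.hsubgroup (B k) \<and> B k \<subseteq> N" for k
    unfolding B_def by (intro conjI hsubgroup_colon[OF Q N]) (auto simp: colon_def)
  have "B (n - 1) = N"
    using colon_products_eq[OF _ sub] len unfolding B_def by simp
  moreover have "B (Suc k) \<subseteq> B k \<union> A k" if "k < n - 1" for k
    using colon_products_snoc_subset[OF cp, of "take k Is"] that len
    unfolding A_def B_def by (simp add: take_Suc_conv_app_nth)
  ultimately have "B 0 = N \<or> (\<exists>i<n - 1. A i = N)"
    using M.hsubgroup_chain_cover[where A = A and B = B and k = "n - 1", OF N A B] by blast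
  moreover have "A 0 = N" if "B 0 = N"
  proof -
    have "N \<subseteq> Q"
      using that colon_products_Nil unfolding B_def by auto
    then show ?thesis
      using A subhypermodule_act_subset[OF Q] unfolding A_def colon_def by blast
  qed
  moreover have "0 < n - 1"
    using arity_n_ge_2 by simp
  ultimately obtain i where "i < n - 1" and "A i = N"
    by blast
  then show ?thesis
    unfolding A_def colon_def mem_gset_singletons act_def subset_iff by blast
qed

definition classical_prime_ideals :: "'m set \<Rightarrow> bool" where
  "classical_prime_ideals Q \<longleftrightarrow>
     (\<forall>Is N1 N2. length Is = n - 1 \<longrightarrow> (\<forall>I\<in>set Is. hyperideal m n f' g' I) \<longrightarrow>
       subhypermodule m n f g N1 \<longrightarrow> subhypermodule m n f g N2 \<longrightarrow>
       hlift f ([N1, gset g Is N2] @ replicate (m - 2) {zm}) \<subseteq> Q \<longrightarrow>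
       (\<exists>i<n - 1. hlift f ([N1, gset g (Is ! i # replicate (n - 2) {one}) N2]
                             @ replicate (m - 2) {zm}) \<subseteq> Q))"

lemma zero_mem_gset_singletons:
  assumes "I \<noteq> {}" and "zm \<in> X"
  shows "zm \<in> gset g (I # replicate (n - 2) {one}) X"
  using assms arity_n_ge_2 by (intro zero_mem_gset) (auto simp: in_set_replicate)

lemma classical_prime_imp_classical_prime_ideals:
  assumes cp: "classical_prime m n f g one Q"
  shows "classical_prime_ideals Q"
  unfolding classical_prime_ideals_def
proof (intro allI impI)
  fix Is N1 N2
  assume len: "length Is = n - 1" and ideals: "\<forall>I\<in>set Is. hyperideal m n f' g' I"
    and N1: "subhypermodule m n f g N1" and N2: "subhypermodule m n f g N2"
    and sub: "hlift f ([N1, gset g Is N2] @ replicate (m - 2) {zm}) \<subseteq> Q"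
  have Q: "M.hsubgroup Q"
    using cp subhypermodule_imp_hsubgroup unfolding classical_prime_def by blast
  have nonempty: "\<forall>I\<in>set Is. I \<noteq> {}"
    using ideals hyperideal_nonempty by blast
  have zero_N1: "zm \<in> N1" and zero_N2: "zm \<in> N2"
    using N1 N2 zero_mem_subhypermodule by blast+
  have "N1 \<subseteq> Q" and "gset g Is N2 \<subseteq> Q"
    using sub M.hlift_pair_subset_iff[OF Q zero_N1 zero_mem_gset[OF len nonempty zero_N2]]
    by blast+
  then obtain i where i: "i < n - 1" and "gset g (Is ! i # replicate (n - 2) {one}) N2 \<subseteq> Q"
    using classical_prime_gset_subset[OF cp subhypermodule_imp_hsubgroup[OF N2] len] by blast
  moreover have "zm \<in> gset g (Is ! i # replicate (n - 2) {one}) N2"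
    using nonempty i len zero_N2 by (intro zero_mem_gset_singletons) auto
  ultimately show "\<exists>i<n - 1. hlift f ([N1, gset g (Is ! i # replicate (n - 2) {one}) N2]
                             @ replicate (m - 2) {zm}) \<subseteq> Q"
    using M.hlift_pair_subset_iff[OF Q zero_N1] \<open>N1 \<subseteq> Q\<close> by blast
qed

lemma mul_image_f': "length ss = m \<Longrightarrow> mul r ` f' ss = f' (map (mul r) ss)"
proof -
  have "mul r = (\<lambda>y. g' ((r # one # replicate (n - 2) one)[1 := y]))"
    by (simp add: mul_def fun_eq_iff)
  moreover assume "length ss = m"
  ultimately show ?thesis
    using g'_distrib[of "r # one # replicate (n - 2) one" ss 1] arity_n_ge_2 by simp
qed

lemma hneg_mul: "R.hneg (mul r s) = mul r (R.hneg s)"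
proof (rule R.hneg_unique)
  have "mul r zr \<in> mul r ` f' (s # R.hneg s # replicate (m - 2) zr)"
    using R.zero_mem_F_hneg by blast
  also have "\<dots> = f' (map (mul r) (s # R.hneg s # replicate (m - 2) zr))"
    by (rule mul_image_f') simp
  finally show "zr \<in> f' (mul r s # mul r (R.hneg s) # replicate (m - 2) zr)"
    by (simp add: mul_zero_right map_replicate_const)
qed

lemma hsubgroup_range_mul: "R.hsubgroup (range (mul r))"
  unfolding R.hsubgroup_def
proof (intro conjI allI impI ballI)
  show "zr \<in> range (mul r)"
    using mul_zero_right by (metis rangeI)
next
  fix xs assume len: "length xs = m" and "set xs \<subseteq> range (mul r)"
  then obtain ss where ss: "xs = map (mul r) ss"
    using ex_map_conv[of xs "mul r"] by blast
  then have "f' xs = mul r ` f' ss"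
    using len mul_image_f'[of ss r] by simp
  then show "f' xs \<subseteq> range (mul r)"
    by blast
next
  fix x assume "x \<in> range (mul r)"
  then obtain s where "x = mul r s"
    by blast
  then show "R.hneg x \<in> range (mul r)"
    by (simp add: hneg_mul)
qed

lemma hyperideal_principal: "hyperideal m n f' g' (range (mul r))"
  unfolding hyperideal_def
proof (intro conjI allI impI)
  show "sub_hypergroup m f' (range (mul r))"
    by (rule R.hsubgroup_imp_sub_hypergroup[OF hsubgroup_range_mul])
next
  fix xs :: "'r list" and i assume len: "length xs = n" and i: "i < n"
  show "(\<lambda>y. g' (xs[i := y])) ` range (mul r) \<subseteq> range (mul r)"
  proof (rule image_subsetI)
    fix y assume "y \<in> range (mul r)"
    then obtain s where y: "y = mul r s"
      by blast
    define rs where "rs = take i xs @ drop (Suc i) xs"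
    have len_rs: "length rs = n - 1"
      using len i unfolding rs_def by simp
    have "mset (xs[i := y]) = mset (y # rs)"
      using i len by (simp add: upd_conv_take_nth_drop rs_def)
    then have "g' (xs[i := y]) = g' (y # rs)"
      using len by (intro g'_commute) simp_all
    also have "\<dots> = mul y (g' (one # rs))"
      by (rule g'_Cons[OF len_rs])
    also have "\<dots> = mul r (mul s (g' (one # rs)))"
      by (simp add: y mul_assoc)
    finally show "g' (xs[i := y]) \<in> range (mul r)"
      by simp
  qed
qed

lemma mul_left_commute: "mul a (mul b c) = mul b (mul a c)"
  by (metis mul_assoc mul_commute)

lemma mul_list_multiples:
  "list_all2 (\<lambda>t r. t \<in> range (mul r)) ts rs \<Longrightarrow> length rs \<le> n \<Longrightarrow>
     mul_list ts \<in> range (mul (mul_list rs))"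
proof (induction rule: list_all2_induct)
  case Nil
  show ?case
    by (metis mul_list_Nil mul_one_left rangeI)
next
  case (Cons t ts r rs)
  obtain u where u: "mul_list ts = mul (mul_list rs) u"
    using Cons by auto
  obtain s where s: "t = mul r s"
    using Cons by blast
  have "length ts < n" and "length rs < n"
    using Cons(2,4) by (auto simp: list_all2_lengthD)
  then have "mul_list (t # ts) = mul (mul_list (r # rs)) (mul s u)"
    using u s by (simp add: mul_list_Cons mul_assoc mul_left_commute)
  then show ?case
    by simp
qed

lemma mem_range_mul_self: "r \<in> range (mul r)"
  by (metis mul_commute mul_one_left rangeI)

lemma gset_principal_colon_subset:
  assumes Q: "subhypermodule m n f g Q" and len: "length rs = n - 1"
  shows "gset g (map (\<lambda>r. range (mul r)) rs) (colon Q N {mul_list rs}) \<subseteq> Q"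
proof
  fix w assume "w \<in> gset g (map (\<lambda>r. range (mul r)) rs) (colon Q N {mul_list rs})"
  then obtain ts x where ts: "list_all2 (\<lambda>r I. r \<in> I) ts (map (\<lambda>r. range (mul r)) rs)"
    and x: "x \<in> colon Q N {mul_list rs}" and w: "w \<in> g ts x"
    unfolding mem_gset by blast
  have len_ts: "length ts = n - 1"
    using ts len by (simp add: list_all2_lengthD)
  have "list_all2 (\<lambda>t r. t \<in> range (mul r)) ts rs"
    using ts unfolding list_all2_conv_all_nth by auto
  then have "mul_list ts \<in> range (mul (mul_list rs))"
    using mul_list_multiples len by simp
  then obtain u where "mul_list ts = mul u (mul_list rs)"
    using mul_commute by auto
  then have "w \<in> act (mul u (mul_list rs)) x"
    using w g_eq_act_mul_list[OF len_ts] by simp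
  then show "w \<in> Q"
    using x subhypermodule_act_subset[OF Q] unfolding act_mul colon_def by blast
qed

lemma classical_prime_ideals_imp_classical_prime:
  assumes Q: "subhypermodule m n f g Q" and "Q \<noteq> UNIV" and crit: "classical_prime_ideals Q"
  shows "classical_prime m n f g one Q"
  unfolding classical_prime_def
proof (intro conjI allI impI)
  fix rs a assume len: "length rs = n - 1" and sub: "g rs a \<subseteq> Q"
  define N where "N = colon Q UNIV {mul_list rs}"
  define Is where "Is = map (\<lambda>r. range (mul r)) rs"
  have N: "subhypermodule m n f g N"
    unfolding N_def by (rule subhypermodule_colon[OF Q subhypermodule_UNIV])
  have a: "a \<in> N"
    using sub g_eq_act_mul_list[OF len] unfolding N_def colon_def by simp
  have len_Is: "length Is = n - 1" and ideals: "\<forall>I\<in>set Is. hyperideal m n f' g' I"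
    using len hyperideal_principal unfolding Is_def by auto
  have Q': "M.hsubgroup Q" and zero_Q: "zm \<in> Q" and zero_N: "zm \<in> N"
    using Q N subhypermodule_imp_hsubgroup zero_mem_subhypermodule by blast+
  have "gset g Is N \<subseteq> Q"
    unfolding Is_def N_def by (rule gset_principal_colon_subset[OF Q len])
  moreover have "zm \<in> gset g Is N"
    using len_Is zero_N unfolding Is_def by (intro zero_mem_gset) auto
  ultimately have "hlift f ([Q, gset g Is N] @ replicate (m - 2) {zm}) \<subseteq> Q"
    using M.hlift_pair_subset_iff[OF Q' zero_Q] by blast
  then obtain i where i: "i < n - 1"
    and "hlift f ([Q, gset g (Is ! i # replicate (n - 2) {one}) N] @ replicate (m - 2) {zm}) \<subseteq> Q"
    using crit[unfolded classical_prime_ideals_def, rule_format, OF len_Is _ Q N] ideals by blast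
  moreover have "zm \<in> gset g (Is ! i # replicate (n - 2) {one}) N"
    using i len zero_N unfolding Is_def by (intro zero_mem_gset_singletons) auto
  ultimately have "gset g (Is ! i # replicate (n - 2) {one}) N \<subseteq> Q"
    using M.hlift_pair_subset_iff[OF Q' zero_Q] by blast
  moreover have "rs ! i \<in> Is ! i"
    using i len mem_range_mul_self unfolding Is_def by simp
  ultimately have "act (rs ! i) a \<subseteq> Q"
    using a unfolding mem_gset_singletons act_def subset_iff by blast
  then show "\<exists>i<n - 1. g (rs ! i # replicate (n - 2) one) a \<subseteq> Q"
    using i unfolding act_def by blast
qed (use assms in blast)+

end

theorem mainTheorem1:
  fixes f' :: "'r list \<Rightarrow> 'r set" and g' :: "'r list \<Rightarrow> 'r" and zr one :: 'r
    and f :: "'m list \<Rightarrow> 'm set" and g :: "'r list \<Rightarrow> 'm \<Rightarrow> 'm set" and zm :: 'm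
    and m n :: nat and Q :: "'m set"
  assumes "hypermodule m n f' g' zr one f g zm"
    and "subhypermodule m n f g Q" and "Q \<noteq> UNIV"
  shows "classical_prime m n f g one Q \<longleftrightarrow>
    (\<forall>Is N1 N2. length Is = n - 1 \<longrightarrow> (\<forall>I\<in>set Is. hyperideal m n f' g' I) \<longrightarrow>
       subhypermodule m n f g N1 \<longrightarrow> subhypermodule m n f g N2 \<longrightarrow>
       (\<forall>i<n - 1. hlift f ([N1, gset g (Is ! i # replicate (n - 2) {one}) N2]
                     @ replicate (m - 2) {zm}) \<inter> (UNIV - Q) \<noteq> {}) \<longrightarrow>
       hlift f ([N1, gset g Is N2] @ replicate (m - 2) {zm}) \<inter> (UNIV - Q) \<noteq> {})"
proof -
  interpret hmodule m n f' g' zr one f g zm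
    by (rule hmodule.intro) (rule assms(1))
  have "classical_prime m n f g one Q \<longleftrightarrow> classical_prime_ideals Q"
    using classical_prime_imp_classical_prime_ideals
      classical_prime_ideals_imp_classical_prime[OF assms(2,3)] by (rule iffI)
  then show ?thesis
    unfolding classical_prime_ideals_def
    by (simp add: Compl_eq_Diff_UNIV[symmetric] disjoint_eq_subset_Compl) blast
qed

end
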